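(* Let $k\ge2$ and let $B$ be a $k\times k$ symmetric matrix over $\mathbb F_2$ of rank $k-2$ with every row sum $0$. Let $\Sigma_B$ be the set of $\alpha=(\alpha_1,\dots,\alpha_k)$ with $\alpha_j\in\{1,5,9,13\}$ and $\prod_j\alpha_j\equiv1\pmod8$ such that the $k\times(k+1)$ matrix $(B\mid\mathfrak b_\alpha)$ has rank $k-1$ over $\mathbb F_2$, where $\mathfrak b_\alpha=([2/\alpha_1],\dots,[2/\alpha_k])^T$. Then $\#\Sigma_B=2^{2k-2}$.
   Context: For an odd integer $a$, $[2/a]=1$ if $a\equiv\pm5\pmod8$ and $[2/a]=0$ otherwise. *)

theory Defs
  imports "HOL-Analysis.Analysis" "HOL-Library.Z2"
begin

text \<open>The symbol [2/a]: for an odd integer a, it is 1 if a is congruent to 5 or -5 mod 8, else 0.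
  Values are taken in the field F_2, modelled by the type bit.\<close>
definition two_sym :: "int \<Rightarrow> bit" where
  "two_sym a = (if a mod 8 = 3 \<or> a mod 8 = 5 then 1 else 0)"

definition bvec :: "('n::finite \<Rightarrow> int) \<Rightarrow> bit ^ 'n" where
  "bvec \<alpha> = (\<chi> j. two_sym (\<alpha> j))"

definition augment :: "bit ^ 'n ^ 'n \<Rightarrow> bit ^ 'n \<Rightarrow> bit ^ ('n + unit) ^ 'n" where
  "augment B b = (\<chi> i. \<chi> c. (case c of Inl j \<Rightarrow> B $ i $ j | Inr _ \<Rightarrow> b $ i))"

definition SigmaB :: "bit ^ 'n::finite ^ 'n \<Rightarrow> ('n \<Rightarrow> int) set" where
  "SigmaB B = {\<alpha>. (\<forall>j. \<alpha> j \<in> {1, 5, 9, 13}) \<and> (\<Prod>j\<in>UNIV. \<alpha> j) mod 8 = 1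
                 \<and> rank (augment B (bvec \<alpha>)) = CARD('n) - 1}"

end

theory Submission
  imports Defs
begin

text \<open>Since every \<open>\<alpha>\<^sub>j \<equiv> 1 (mod 4)\<close>, the condition \<open>\<Prod>\<^sub>j \<alpha>\<^sub>j \<equiv> 1 (mod 8)\<close> says
  \<open>\<Sum>\<^sub>j [2/\<alpha>\<^sub>j] = 0\<close>, i.e. that the column \<open>b = b\<^sub>\<alpha>\<close> is orthogonal to the all-ones vector \<open>1\<close>;
  and each \<open>b\<close> arises from exactly \<open>2\<^sup>k\<close> admissible \<open>\<alpha>\<close>. Appending \<open>b\<close> to \<open>B\<close> raises the rank
  iff \<open>b\<close> is not orthogonal to the left kernel \<open>N\<close> of \<open>B\<close>. By rank--nullity \<open>N\<close> has four
  elements, and it contains \<open>1\<close> because \<open>B\<close> is symmetric with zero row sums; hence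
  \<open>N = {0, 1, u, u + 1}\<close>, and for \<open>b\<close> orthogonal to \<open>1\<close> the rank of \<open>(B | b)\<close> is \<open>k - 1\<close> iff
  \<open>u \<cdot> b = 1\<close>. As \<open>b \<mapsto> (1 \<cdot> b, u \<cdot> b)\<close> is a linear surjection onto \<open>F\<^sub>2\<^sup>2\<close>, exactly
  \<open>2\<^sup>k\<^sup>-\<^sup>2\<close> columns \<open>b\<close> qualify.\<close>

lemma bit_cases: "(x::bit) = 0 \<or> x = 1" by (cases "x = 0") auto

lemma UNIV_bit: "(UNIV::bit set) = {0, 1}"
  using bit_cases by auto

instance bit :: finite
  by standard (simp add: UNIV_bit)

lemma card_bit: "CARD(bit) = 2"
  unfolding UNIV_bit by simp

lemma bit_add_self [simp]: "(x::bit) + x = 0"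
  using bit_cases[of x] by auto

lemma bit_vec_add_self [simp]: "(x::bit^'n) + x = 0"
  by (simp add: vec_eq_iff)

lemma card_span_insert:
  fixes x :: "'a::{field,finite}^'n"
  assumes "x \<notin> vec.span S"
  shows "card (vec.span (insert x S)) = CARD('a) * card (vec.span S)"
proof -
  let ?f = "\<lambda>(k, v). k *s x + v"
  have "vec.span (insert x S) = ?f ` (UNIV \<times> vec.span S)"
  proof (intro equalityI subsetI)
    fix y assume "y \<in> vec.span (insert x S)"
    then obtain k where "y - k *s x \<in> vec.span S" by (auto simp: vec.span_insert)
    then show "y \<in> ?f ` (UNIV \<times> vec.span S)"
      by (auto intro!: image_eqI[of _ _ "(k, y - k *s x)"])
  next
    fix y assume "y \<in> ?f ` (UNIV \<times> vec.span S)"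
    then obtain k v where "v \<in> vec.span S" "y = k *s x + v" by auto
    then show "y \<in> vec.span (insert x S)" by (auto simp: vec.span_insert intro!: exI[of _ k])
  qed
  moreover have "inj_on ?f (UNIV \<times> vec.span S)"
  proof (rule inj_onI, clarsimp)
    fix k v l w
    assume v: "v \<in> vec.span S" and w: "w \<in> vec.span S" and eq: "k *s x + v = l *s x + w"
    have "(k - l) *s x = w - v"
      using eq by (simp add: algebra_simps)
    then have kl: "(k - l) *s x \<in> vec.span S"
      using v w by (simp add: vec.span_diff)
    have "k = l"
    proof (rule ccontr)
      assume "k \<noteq> l"
      then have "x = inverse (k - l) *s ((k - l) *s x)"
        by (simp only: vec.scale_scale) simp
      with assms vec.span_scale[OF kl] show False by metis
    qed
    then show "k = l \<and> v = w"
      using eq by simp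
  qed
  ultimately show ?thesis
    by (simp add: card_image card_cartesian_product)
qed

lemma card_span:
  fixes S :: "('a::{field,finite}^'n) set"
  shows "card (vec.span S) = CARD('a) ^ vec.dim S"
proof -
  obtain B where B: "B \<subseteq> S" "vec.independent B" "S \<subseteq> vec.span B" "card B = vec.dim S"
    using vec.basis_exists[of S] by blast
  have "card (vec.span B) = CARD('a) ^ card B"
    using finite[of B] \<open>vec.independent B\<close>
  proof (induction B rule: finite_induct)
    case (insert x B)
    then show ?case
      by (simp add: vec.independent_insert card_span_insert)
  qed simp
  moreover have "vec.span B = vec.span S"
    using B by (metis vec.span_mono vec.span_span subset_antisym)
  ultimately show ?thesis
    using B(4) by simp
qed

lemma span_rows_eq_range:
  fixes A :: "'a::field^'n^'m"
  shows "vec.span (rows A) = range (\<lambda>c. c v* A)"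
proof
  show "vec.span (rows A) \<subseteq> range (\<lambda>c. c v* A)"
  proof (rule vec.span_minimal)
    show "rows A \<subseteq> range (\<lambda>c. c v* A)"
    proof
      fix r assume "r \<in> rows A"
      then obtain i where r: "r = row i A" by (auto simp: rows_def)
      have "(if j = i then 1 else 0) * a = (if j = i then a else 0)" for j and a :: 'a
        by simp
      then have "axis i 1 v* A = r"
        unfolding r by (simp add: vec_eq_iff vector_matrix_mult_def axis_def row_def)
      then show "r \<in> range (\<lambda>c. c v* A)" by blast
    qed
    show "vec.subspace (range (\<lambda>c. c v* A))"
      unfolding vec.subspace_def
      by (auto simp flip: vector_matrix_left_distrib scalar_vector_matrix_assoc
          intro: range_eqI[of _ _ 0])
  qed
  show "range (\<lambda>c. c v* A) \<subseteq> vec.span (rows A)"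
  proof
    fix y assume "y \<in> range (\<lambda>c. c v* A)"
    then obtain c where "y = c v* A"
      by blast
    also have "c v* A = (\<Sum>i\<in>UNIV. c $ i *s A $ i)"
      by (simp add: vec_eq_iff vector_matrix_mult_def sum_component mult.commute)
    finally have y: "y = (\<Sum>i\<in>UNIV. c $ i *s A $ i)" .
    have "A $ i \<in> rows A" for i
      by (auto simp: rows_def row_def)
    then show "y \<in> vec.span (rows A)"
      unfolding y by (intro vec.span_sum vec.span_scale vec.span_base)
  qed
qed

lemma card_fibre_additive:
  fixes f :: "'a::{ab_group_add,finite} \<Rightarrow> 'b::ab_group_add"
  assumes add: "\<And>x y. f (x + y) = f x + f y" and "y \<in> range f"
  shows "card (f -` {y}) = card (f -` {0})"
proof -
  obtain x0 where y: "y = f x0" using \<open>y \<in> range f\<close> by auto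
  have f0: "f 0 = 0" using add[of 0 0] by simp
  have "f -` {y} = (+) x0 ` f -` {0}"
  proof (intro equalityI subsetI)
    fix z assume "z \<in> f -` {y}"
    then have "f (z - x0) = 0"
      using add[of "z - x0" x0] y by simp
    then show "z \<in> (+) x0 ` f -` {0}"
      by (auto intro!: image_eqI[of _ _ "z - x0"])
  qed (auto simp: add y)
  then show ?thesis
    by (simp add: card_image)
qed

lemma card_range_mult_card_kernel:
  fixes f :: "'a::{ab_group_add,finite} \<Rightarrow> 'b::ab_group_add"
  assumes add: "\<And>x y. f (x + y) = f x + f y"
  shows "card (range f) * card (f -` {0}) = CARD('a)"
proof -
  have "CARD('a) = card (\<Union>y\<in>range f. f -` {y})"
    by (rule arg_cong[where f = card]) blast
  also have "\<dots> = (\<Sum>y\<in>range f. card (f -` {y}))"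
    by (rule card_UN_disjoint) auto
  also have "\<dots> = card (range f) * card (f -` {0})"
    by (simp add: card_fibre_additive[OF add])
  finally show ?thesis ..
qed

lemma rank_mult_card_left_kernel:
  fixes A :: "'a::{field,finite}^'n^'m"
  shows "CARD('a) ^ rank A * card {c. c v* A = 0} = CARD('a) ^ CARD('m)"
proof -
  have "card (range (\<lambda>c. c v* A)) = CARD('a) ^ rank A"
    by (simp add: row_rank_def_gen card_span flip: span_rows_eq_range)
  moreover have "card (range (\<lambda>c. c v* A)) * card {c. c v* A = 0} = CARD('a^'m)"
    using card_range_mult_card_kernel[of "\<lambda>c. c v* A"] by (simp add: vector_matrix_left_distrib vimage_def)
  ultimately show ?thesis
    by simp
qed

definition vec_dot :: "'a::semiring_1^'n \<Rightarrow> 'a^'n \<Rightarrow> 'a" where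
  "vec_dot x y = (\<Sum>i\<in>UNIV. x $ i * y $ i)"

lemma vec_dot_add_left: "vec_dot (x + y) z = vec_dot x z + vec_dot y z"
  by (simp add: vec_dot_def distrib_right sum.distrib)

lemma vec_dot_add_right: "vec_dot x (y + z) = vec_dot x y + vec_dot x z"
  by (simp add: vec_dot_def distrib_left sum.distrib)

lemma vec_dot_0_left [simp]: "vec_dot 0 x = 0"
  by (simp add: vec_dot_def)

lemma vec_dot_0_right [simp]: "vec_dot x 0 = 0"
  by (simp add: vec_dot_def)

lemma vec_dot_1_left: "vec_dot 1 x = (\<Sum>i\<in>UNIV. x $ i)"
  by (simp add: vec_dot_def)

lemma vec_dot_axis: "vec_dot x (axis i 1) = x $ i"
proof -
  have "x $ j * (if j = i then 1 else 0) = (if j = i then x $ i else 0)" for j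
    by simp
  then show ?thesis
    by (simp add: vec_dot_def axis_def)
qed

lemma left_kernel_augment:
  fixes B :: "bit^'n^'n"
  shows "c v* augment B b = 0 \<longleftrightarrow> c v* B = 0 \<and> vec_dot c b = 0"
proof -
  have "(c v* augment B b) $ Inl j = (c v* B) $ j" "(c v* augment B b) $ Inr u = vec_dot c b" for j u
    by (simp_all add: vector_matrix_mult_def augment_def vec_dot_def)
  then show ?thesis
    unfolding vec_eq_iff split_sum_all by simp
qed

text \<open>Over \<open>F\<^sub>2\<close> the left kernel of \<open>(B | b)\<close> is either the left kernel \<open>N\<close> of \<open>B\<close> or a
  subgroup of index two in it, according as \<open>b\<close> is orthogonal to \<open>N\<close> or not.\<close>

lemma rank_augment:
  fixes B :: "bit^'n^'n"
  shows "rank (augment B b) =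
    (if \<exists>c. c v* B = 0 \<and> vec_dot c b = 1 then Suc (rank B) else rank B)"
proof -
  define N where "N = {c. c v* B = 0}"
  define K where "K = {c. c v* augment B b = 0}"
  have K: "K = {c \<in> N. vec_dot c b = 0}"
    by (auto simp: K_def N_def left_kernel_augment)
  have rank_K_N: "2 ^ rank (augment B b) * card K = 2 ^ rank B * card N"
    using rank_mult_card_left_kernel[of B] rank_mult_card_left_kernel[of "augment B b"]
    by (simp add: card_bit K_def N_def)
  have "0 \<in> K"
    by (simp add: K_def)
  then have "card K \<noteq> 0"
    by (auto simp: card_0_eq)
  show ?thesis
  proof (cases "\<exists>c. c v* B = 0 \<and> vec_dot c b = 1")
    case True
    then obtain c0 where c0: "c0 \<in> N" "vec_dot c0 b = 1"
      by (auto simp: N_def)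
    have shift: "c0 + c \<in> N \<and> vec_dot (c0 + c) b = vec_dot c b + 1" if "c \<in> N" for c
      using that c0 by (simp add: N_def vector_matrix_left_distrib vec_dot_add_left add.commute)
    have "N = K \<union> (+) c0 ` K"
    proof (intro equalityI subsetI)
      fix c assume c: "c \<in> N"
      show "c \<in> K \<union> (+) c0 ` K"
      proof (cases "vec_dot c b = 0")
        case False
        then have "c0 + c \<in> K"
          using shift[OF c] bit_cases[of "vec_dot c b"] K by simp
        moreover have "c = c0 + (c0 + c)"
          by (simp flip: add.assoc)
        ultimately show ?thesis
          by blast
      qed (use c K in simp)
    qed (use K shift in auto)
    moreover have "K \<inter> (+) c0 ` K = {}"
    proof -
      have "vec_dot (c0 + c) b = 1" if "c \<in> K" for c
        using shift[of c] that K by simp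
      then show ?thesis
        using K by auto
    qed
    ultimately have "card N = 2 * card K"
      by (simp add: card_Un_disjoint card_image)
    with rank_K_N \<open>card K \<noteq> 0\<close> have "2 ^ rank (augment B b) = (2::nat) ^ Suc (rank B)"
      by simp
    with True show ?thesis
      by (simp only: power_inject_exp one_less_numeral_iff semiring_norm)
  next
    case False
    then have "vec_dot c b = 0" if "c \<in> N" for c
      using that bit_cases by (auto simp: N_def)
    then have "K = N"
      using K by auto
    with rank_K_N \<open>card K \<noteq> 0\<close> have "2 ^ rank (augment B b) = (2::nat) ^ rank B"
      by simp
    with False show ?thesis
      by (simp only: power_inject_exp one_less_numeral_iff semiring_norm)
  qed
qed

lemma exponent_two_group_card_4:
  fixes N :: "(bit^'n) set"
  assumes card: "card N = 4" and w: "w \<in> N" "w \<noteq> 0"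
    and add: "\<And>x y. x \<in> N \<Longrightarrow> y \<in> N \<Longrightarrow> x + y \<in> N"
  obtains u where "N = {0, w, u, u + w}" "u \<noteq> 0" "u \<noteq> w"
proof -
  have "0 \<in> N"
    using add[OF w(1) w(1)] by simp
  have "\<not> N \<subseteq> {0, w}"
  proof
    assume "N \<subseteq> {0, w}"
    then have "card N \<le> card {0, w}"
      by (intro card_mono) auto
    also have "\<dots> \<le> 2"
      by (simp add: card_insert_if)
    finally show False
      using card by simp
  qed
  then obtain u where u: "u \<in> N" "u \<noteq> 0" "u \<noteq> w"
    by blast
  have "u + w + w = u"
    by (simp add: add.assoc)
  then have "u + w \<noteq> 0"
    using u(3) by (metis add_0)
  moreover have "u + w \<noteq> w" "u + w \<noteq> u"
    using u(2) w(2) by simp_all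
  ultimately have "card {0, w, u, u + w} = card N"
    using u w card by (auto simp: card_insert_if)
  then have "N = {0, w, u, u + w}"
    using \<open>0 \<in> N\<close> u w add by (intro card_subset_eq[symmetric]) auto
  then show thesis
    using u(2,3) by (rule that)
qed

lemma card_vec_dot_fibre:
  fixes u :: "bit^'n"
  assumes "u \<noteq> 0" "u \<noteq> 1"
  shows "4 * card {b. vec_dot 1 b = 0 \<and> vec_dot u b = 1} = 2 ^ CARD('n)"
proof -
  define f where "f b = (vec_dot 1 b, vec_dot u b)" for b
  have f_add: "f (x + y) = f x + f y" for x y
    by (simp add: f_def vec_dot_add_right)
  obtain i where "u $ i = 1"
    using assms(1) bit_cases by (metis vec_eq_iff zero_index)
  moreover obtain j where "u $ j = 0"
    using assms(2) bit_cases by (metis vec_eq_iff one_index)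
  ultimately have "f 0 = (0, 0)" "f (axis i 1) = (1, 1)" "f (axis j 1) = (1, 0)"
    "f (axis i 1 + axis j 1) = (0, 1)"
    by (simp_all add: f_def vec_dot_axis vec_dot_add_right)
  then have "p \<in> range f" for p
    using bit_cases[of "fst p"] bit_cases[of "snd p"] by (cases p) (metis fst_conv snd_conv rangeI)
  then have "range f = UNIV"
    by blast
  then have "4 * card (f -` {0}) = 2 ^ CARD('n)"
    using card_range_mult_card_kernel[OF f_add] by (simp add: card_bit)
  moreover have "card (f -` {(0, 1)}) = card (f -` {0})"
    using card_fibre_additive[OF f_add] \<open>range f = UNIV\<close> by simp
  moreover have "f -` {(0, 1)} = {b. vec_dot 1 b = 0 \<and> vec_dot u b = 1}"
    by (auto simp: f_def)
  ultimately show ?thesis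
    by simp
qed

lemma one_in_left_kernel:
  fixes B :: "'a::comm_semiring_1^'n^'n"
  assumes "transpose B = B" "\<forall>i. (\<Sum>j\<in>UNIV. B $ i $ j) = 0"
  shows "1 v* B = 0"
proof -
  have "1 v* B = B *v 1"
    by (metis assms(1) vector_transpose_matrix)
  then show ?thesis
    using assms(2) by (simp add: vec_eq_iff matrix_vector_mult_def)
qed

lemma card_columns_raising_rank:
  fixes B :: "bit^'n^'n"
  assumes "CARD('n) \<ge> 2" "transpose B = B" "rank B = CARD('n) - 2"
    and "\<forall>i. (\<Sum>j\<in>UNIV. B $ i $ j) = 0"
  shows "card {b. (\<Sum>j\<in>UNIV. b $ j) = 0 \<and> rank (augment B b) = CARD('n) - 1}
    = 2 ^ (CARD('n) - 2)"
proof -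
  obtain m where k: "CARD('n) = m + 2"
    using assms(1) by (metis le_add_diff_inverse2)
  define N where "N = {c::bit^'n. c v* B = 0}"
  have "2 ^ m * card N = 2 ^ m * 4"
    using rank_mult_card_left_kernel[of B] assms(3) by (simp add: N_def card_bit k power_add)
  then have "card N = 4"
    by simp
  moreover have "1 \<in> N"
    using one_in_left_kernel[OF assms(2,4)] by (simp add: N_def)
  moreover have "(1::bit^'n) \<noteq> 0"
    by (simp add: vec_eq_iff)
  ultimately obtain u where N: "N = {0, 1, u, u + 1}" "u \<noteq> 0" "u \<noteq> 1"
    by (rule exponent_two_group_card_4) (auto simp: N_def vector_matrix_left_distrib)
  have "rank (augment B b) = m + 1 \<longleftrightarrow> vec_dot u b = 1" if "vec_dot 1 b = 0" for b
  proof -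
    have "rank (augment B b) = m + 1 \<longleftrightarrow> (\<exists>c\<in>N. vec_dot c b = 1)"
      using rank_augment[of B b] assms(3) k by (auto simp: N_def)
    also have "\<dots> \<longleftrightarrow> vec_dot u b = 1"
      using that N(1) by (simp add: vec_dot_add_left)
    finally show ?thesis .
  qed
  then have "{b. (\<Sum>j\<in>UNIV. b $ j) = 0 \<and> rank (augment B b) = m + 1}
      = {b. vec_dot 1 b = 0 \<and> vec_dot u b = 1}"
    by (auto simp: vec_dot_1_left)
  then show ?thesis
    using card_vec_dot_fibre[OF N(2,3)] by (simp add: k power_add)
qed

lemma two_sym_mod_8: "two_sym (a mod 8) = two_sym a"
  by (simp add: two_sym_def)

lemma two_sym_mult:
  assumes "odd a" "odd b"
  shows "two_sym (a * b) = two_sym a + two_sym b"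
proof -
  have "x mod 8 \<in> {1, 3, 5, 7}" if "odd x" for x :: int
  proof -
    have "x mod 8 = 1 \<or> x mod 8 = 3 \<or> x mod 8 = 5 \<or> x mod 8 = 7"
      using that by presburger
    then show ?thesis
      by simp
  qed
  moreover have "\<forall>x\<in>{1, 3, 5, 7}. \<forall>y\<in>{1, 3, 5, 7}. two_sym (x * y) = two_sym x + two_sym y"
    by (simp add: two_sym_def)
  ultimately have "two_sym (a mod 8 * (b mod 8)) = two_sym (a mod 8) + two_sym (b mod 8)"
    using assms by blast
  then show ?thesis
    by (metis two_sym_mod_8 mod_mult_eq)
qed

lemma two_sym_prod:
  assumes "\<forall>j\<in>A. odd (\<alpha> j)"
  shows "two_sym (\<Prod>j\<in>A. \<alpha> j) = (\<Sum>j\<in>A. two_sym (\<alpha> j))"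
  using assms
proof (induction A rule: infinite_finite_induct)
  case (insert x A)
  then show ?case
    by (simp add: two_sym_mult even_prod_iff)
qed (simp_all add: two_sym_def)

lemma mod_8_eq_1_iff_two_sym:
  assumes "a mod 4 = 1"
  shows "a mod 8 = 1 \<longleftrightarrow> two_sym a = 0"
proof -
  have "a mod 8 = 1 \<or> a mod 8 = 5"
    using assms by presburger
  then show ?thesis
    by (auto simp: two_sym_def)
qed

lemma prod_mod_4_eq_1:
  assumes "\<forall>j\<in>A. \<alpha> j mod 4 = (1::int)"
  shows "(\<Prod>j\<in>A. \<alpha> j) mod 4 = 1"
proof -
  have "(\<Prod>j\<in>A. \<alpha> j) mod 4 = (\<Prod>j\<in>A. \<alpha> j mod 4) mod 4"
    by (simp add: mod_prod_eq)
  also have "\<dots> = 1"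
    using assms by simp
  finally show ?thesis .
qed

lemma card_bvec_fibre:
  "card {\<alpha>::'n::finite \<Rightarrow> int. (\<forall>j. \<alpha> j \<in> {1, 5, 9, 13}) \<and> bvec \<alpha> = b} = 2 ^ CARD('n)"
proof -
  let ?T = "\<lambda>x. {a \<in> {1, 5, 9, 13::int}. two_sym a = x}"
  have "{\<alpha>. (\<forall>j. \<alpha> j \<in> {1, 5, 9, 13}) \<and> bvec \<alpha> = b} = Pi\<^sub>E UNIV (\<lambda>j. ?T (b $ j))"
    by (auto simp: bvec_def vec_eq_iff PiE_UNIV_domain)
  moreover have "?T x = (if x = 1 then {5, 13} else {1, 9})" for x
    using bit_cases[of x] by (auto simp: two_sym_def)
  then have "card (?T x) = 2" for x
    by simp
  ultimately show ?thesis
    by (simp add: card_PiE)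
qed

lemma card_SigmaB:
  fixes B :: "bit^'n::finite^'n"
  shows "card (SigmaB B) =
    2 ^ CARD('n) * card {b. (\<Sum>j\<in>UNIV. b $ j) = 0 \<and> rank (augment B b) = CARD('n) - 1}"
proof -
  let ?F = "\<lambda>b. {\<alpha>::'n \<Rightarrow> int. (\<forall>j. \<alpha> j \<in> {1, 5, 9, 13}) \<and> bvec \<alpha> = b}"
  let ?G = "{b. (\<Sum>j\<in>UNIV. b $ j) = 0 \<and> rank (augment B b) = CARD('n) - 1}"
  have "(\<Prod>j\<in>UNIV. \<alpha> j) mod 8 = 1 \<longleftrightarrow> (\<Sum>j\<in>UNIV. bvec \<alpha> $ j) = 0"
    if "\<forall>j. \<alpha> j \<in> {1, 5, 9, 13}" for \<alpha> :: "'n \<Rightarrow> int"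
  proof -
    have "\<alpha> j mod 4 = 1 \<and> odd (\<alpha> j)" for j
      using that[rule_format, of j] by auto
    then have "\<forall>j\<in>UNIV. \<alpha> j mod 4 = 1" "\<forall>j\<in>UNIV. odd (\<alpha> j)"
      by simp_all
    then show ?thesis
      by (simp add: mod_8_eq_1_iff_two_sym prod_mod_4_eq_1 two_sym_prod bvec_def)
  qed
  then have "SigmaB B = (\<Union>b\<in>?G. ?F b)"
    by (auto simp: SigmaB_def)
  moreover have "finite (?F b)" for b
    using card_bvec_fibre[of b] by (intro card_ge_0_finite) simp
  ultimately have "card (SigmaB B) = (\<Sum>b\<in>?G. card (?F b))"
    by (simp only:) (rule card_UN_disjoint; auto)
  then show ?thesis
    by (simp only: card_bvec_fibre sum_constant) simp
qed

theorem mainTheorem9: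
  fixes B :: "bit ^ 'n::finite ^ 'n"
  assumes "CARD('n) \<ge> 2"
    and "transpose B = B"
    and "rank B = CARD('n) - 2"
    and "\<forall>i. (\<Sum>j\<in>UNIV. B $ i $ j) = 0"
  shows "card (SigmaB B) = 2 ^ (2 * CARD('n) - 2)"
proof -
  have "card (SigmaB B) = 2 ^ CARD('n) * 2 ^ (CARD('n) - 2)"
    using card_columns_raising_rank[OF assms] by (simp add: card_SigmaB)
  also have "\<dots> = 2 ^ (2 * CARD('n) - 2)"
    using assms(1) by (simp flip: power_add)
  finally show ?thesis .
qed

end
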